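(* Let $a\geq b>0$, $k\geq 1$ and $t>0$. Then \[ \frac{ka\gamma-b\gamma}{k}+\frac{b}{k}\ln k + \frac{a-b}{t}+a\psi(t)-b\psi_k(t)\geq 0 . \]
   Context: $\gamma$ denotes the Euler–Mascheroni constant and $\psi(t)=\Gamma'(t)/\Gamma(t)$ is the digamma function for $t>0$, where $\Gamma$ is Euler's Gamma function. For $k>0$ and $t>0$, the $k$-Gamma function is $\Gamma_k(t)=\int_0^\infty e^{-x^k/k}x^{t-1}\,dx$, and $\psi_k(t)=\frac{d}{dt}\ln\Gamma_k(t)=\Gamma_k'(t)/\Gamma_k(t)$. *)

theory Defs
  imports "HOL-Analysis.Analysis"
begin

definition Gamma_k :: "real \<Rightarrow> real \<Rightarrow> real" where
  "Gamma_k k t = integral {0<..} (\<lambda>x. exp (- (x powr k) / k) * x powr (t - 1))"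

definition psi_k :: "real \<Rightarrow> real \<Rightarrow> real" where
  "psi_k k t = deriv (\<lambda>s. ln (Gamma_k k s)) t"

end

theory Submission
  imports Defs
begin

text \<open>Substituting \<open>u = x\<^sup>k / k\<close> in the defining integral gives
  \<open>\<Gamma>\<^sub>k(t) = k\<^bsup>t/k - 1\<^esup> \<Gamma>(t/k)\<close>, hence \<open>\<psi>\<^sub>k(t) = (ln k + \<psi>(t/k)) / k\<close>.
  With \<open>f(x) = \<gamma> + \<psi>(x + 1) = \<gamma> + \<psi>(x) + 1/x\<close> the left-hand side becomes
  \<open>a f(t) - (b/k) f(t/k)\<close>. Since \<open>\<psi>\<close> is nondecreasing on \<open>(0,\<infinity>)\<close> and \<open>\<psi>(1) = -\<gamma>\<close>,
  \<open>f\<close> is nonnegative and nondecreasing on \<open>[0,\<infinity>)\<close>, so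
  \<open>(b/k) f(t/k) \<le> b f(t/k) \<le> b f(t) \<le> a f(t)\<close>.\<close>

lemma Gamma_real_has_integral_greaterThan:
  fixes s :: real
  assumes "s > 0"
  shows "((\<lambda>u. u powr (s - 1) / exp u) has_integral Gamma s) {0<..}"
proof -
  have "((\<lambda>u. u powr (s - 1) / exp u) has_integral Gamma s) {0..}"
    using Gamma_integral_real[OF assms] .
  hence "((\<lambda>u. if u \<in> {0<..} then u powr (s - 1) / exp u else 0) has_integral Gamma s) {0..}"
    by (rule has_integral_spike [of "{0}", rotated 2]) auto
  thus ?thesis
    by (subst (asm) has_integral_restrict) auto
qed

lemma bij_betw_powr_div_greaterThan:
  fixes k :: real
  assumes "k > 0"
  shows "bij_betw (\<lambda>x. x powr k / k) {0<..} {0<..}"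
  by (rule bij_betw_byWitness[where f' = "\<lambda>u. (k * u) powr (1 / k)"])
     (use assms in \<open>auto simp: powr_powr powr_mult\<close>)

lemma has_integral_powr_substitution:
  fixes k I :: real and F :: "real \<Rightarrow> real"
  assumes k: "k > 0"
    and F: "(F has_integral I) {0<..}" "F absolutely_integrable_on {0<..}"
  shows "((\<lambda>x. x powr (k - 1) * F (x powr k / k)) has_integral I) {0<..}"
proof -
  let ?g = "\<lambda>x::real. x powr k / k"
  have "(?g has_field_derivative x powr (k - 1)) (at x within {0<..})" if "x \<in> {0<..}" for x
    using that k by (auto intro!: derivative_eq_intros)
  from has_absolute_integral_change_of_variables_1'[OF _ this]
  have "(\<lambda>x. \<bar>x powr (k - 1)\<bar> * F (?g x)) absolutely_integrable_on {0<..} \<and>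
        integral {0<..} (\<lambda>x. \<bar>x powr (k - 1)\<bar> * F (?g x)) = I"
    using bij_betw_powr_div_greaterThan[OF k] F by (simp add: bij_betw_def integral_unique)
  thus ?thesis
    by (simp add: absolutely_integrable_on_def has_integral_integrable_integral)
qed

lemma Gamma_k_eq_Gamma:
  fixes k t :: real
  assumes k: "k > 0" and t: "t > 0"
  shows "Gamma_k k t = k powr (t / k - 1) * Gamma (t / k)"
proof -
  define s where "s = t / k"
  have s: "s > 0" using k t by (simp add: s_def)
  define F where "F = (\<lambda>u::real. k powr (s - 1) * (u powr (s - 1) / exp u))"
  have FI: "(F has_integral k powr (s - 1) * Gamma s) {0<..}"
    unfolding F_def by (intro has_integral_mult_right Gamma_real_has_integral_greaterThan s)
  have "F absolutely_integrable_on {0<..}"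
    using FI by (intro nonnegative_absolutely_integrable_1) (auto simp: F_def has_integral_integrable)
  with FI have sub: "((\<lambda>x. x powr (k - 1) * F (x powr k / k))
                        has_integral k powr (s - 1) * Gamma s) {0<..}"
    by (intro has_integral_powr_substitution k)
  have integrand: "x powr (k - 1) * F (x powr k / k) = exp (- (x powr k) / k) * x powr (t - 1)"
    if "x \<in> {0<..}" for x
  proof -
    have x: "x > 0" using that by simp
    have "k * (s - 1) = t - k" using k by (simp add: s_def field_simps)
    hence "(x powr k / k) powr (s - 1) = x powr (t - k) / k powr (s - 1)"
      using x k by (simp add: powr_divide powr_powr)
    hence "x powr (k - 1) * F (x powr k / k) = x powr (k - 1) * x powr (t - k) / exp (x powr k / k)"
      using k by (simp add: F_def)
    also have "x powr (k - 1) * x powr (t - k) = x powr (t - 1)"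
      using x by (simp add: powr_add[symmetric])
    finally show ?thesis
      by (simp add: exp_minus divide_inverse mult.commute)
  qed
  have "((\<lambda>x. exp (- (x powr k) / k) * x powr (t - 1))
           has_integral k powr (s - 1) * Gamma s) {0<..}"
    by (rule has_integral_eq[OF integrand sub])
  thus ?thesis
    unfolding Gamma_k_def s_def by (rule integral_unique)
qed

lemma psi_k_eq_Digamma:
  fixes k t :: real
  assumes k: "k > 0" and t: "t > 0"
  shows "psi_k k t = ln k / k + Digamma (t / k) / k"
proof -
  have "ln (Gamma_k k s) = (s / k - 1) * ln k + ln_Gamma (s / k)" if "s > 0" for s
  proof -
    have "Gamma (s / k) > 0" using that k by (intro Gamma_real_pos divide_pos_pos)
    hence "ln (Gamma_k k s) = ln (k powr (s / k - 1)) + ln (Gamma (s / k))"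
      using that k by (simp add: Gamma_k_eq_Gamma ln_mult_pos)
    thus ?thesis
      using that k by (simp add: ln_powr ln_Gamma_real_pos)
  qed
  hence ev: "\<forall>\<^sub>F s in nhds t. ln (Gamma_k k s) = (s / k - 1) * ln k + ln_Gamma (s / k)"
    using eventually_nhds_in_open[of "{0<..}" t] t by (auto elim!: eventually_mono)
  have "((\<lambda>s. (s / k - 1) * ln k + ln_Gamma (s / k)) has_field_derivative
          ln k / k + Digamma (t / k) / k) (at t)"
    using k t by (auto intro!: derivative_eq_intros simp: field_simps)
  hence "((\<lambda>s. ln (Gamma_k k s)) has_field_derivative ln k / k + Digamma (t / k) / k) (at t)"
    by (rule DERIV_cong_ev[OF refl ev refl, THEN iffD2])
  thus ?thesis
    unfolding psi_k_def by (rule DERIV_imp_deriv)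
qed

lemma euler_mascheroni_plus_Digamma_plus1_nonneg:
  fixes x :: real
  assumes "x \<ge> 0"
  shows "euler_mascheroni + Digamma (x + 1) \<ge> 0"
  using Digamma_real_mono[of 1 "x + 1"] assms by simp

theorem lemma3p5:
  fixes a b k t :: real
  assumes "a \<ge> b" "b > 0" "k \<ge> 1" "t > 0"
  shows "(k * a * euler_mascheroni - b * euler_mascheroni) / k + (b / k) * ln k
           + (a - b) / t + a * Digamma t - b * psi_k k t \<ge> 0"
proof -
  have k: "k > 0" using assms by simp
  define f where "f x = euler_mascheroni + Digamma (x + 1)" for x :: real
  have "f t = euler_mascheroni + Digamma t + 1 / t"
       "f (t / k) = euler_mascheroni + Digamma (t / k) + k / t"
    using assms k Digamma_plus1[of t] Digamma_plus1[of "t / k"] by (simp_all add: f_def)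
  hence lhs: "(k * a * euler_mascheroni - b * euler_mascheroni) / k + (b / k) * ln k
           + (a - b) / t + a * Digamma t - b * psi_k k t = a * f t - (b / k) * f (t / k)"
    using k assms by (simp add: psi_k_eq_Digamma field_simps)
  have f_pos: "f (t / k) \<ge> 0"
    unfolding f_def using assms by (intro euler_mascheroni_plus_Digamma_plus1_nonneg) simp
  have f_mono: "f (t / k) \<le> f t"
    unfolding f_def using assms k by (simp add: Digamma_real_mono add_pos_nonneg divide_le_eq)
  have "(b / k) * f (t / k) \<le> b * f (t / k)"
    using f_pos assms k by (intro mult_right_mono) (auto simp: divide_le_eq)
  also have "\<dots> \<le> b * f t" using f_mono assms by (intro mult_left_mono) auto
  also have "\<dots> \<le> a * f t" using f_mono f_pos assms by (intro mult_right_mono) auto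
  finally show ?thesis using lhs by simp
qed

end
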